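(* Let $G$ be a non-bipartite graph whose edge set decomposes into two bipartite spanning subgraphs $H_1$ and $H_2$ (i.e. $V(H_1)=V(H_2)=V(G)$, $E(H_1)\cap E(H_2)=\emptyset$, $E(H_1)\cup E(H_2)=E(G)$) such that $\Delta(G)=2\Delta(H_1)=2\Delta(H_2)$. If $H_1$ and $H_2$ have good signings, then the lexicographic product $G \circ \overline{K_2}$ has a good signing.
   Context: For a graph $H$ and an edge-signing $\sigma: E(H)\to\{-1,1\}$, the signed adjacency matrix $A^{\sigma}$ has $(i,j)$ entry $\sigma(ij)$ if $ij\in E(H)$ and $0$ otherwise; $\rho(H^\sigma)$ is the maximum absolute value of an eigenvalue of $A^\sigma$. A signing $\sigma$ of $H$ (with $\Delta(H)>1$) is a good signing if $\rho(H^\sigma)\le 2\sqrt{\Delta(H)-1}$, where $\Delta(H)$ is the maximum degree. $\overline{K_2}$ is the edgeless graph on two vertices. The lexicographic product $G\circ H$ has vertex set $V(G)\times V(H)$, with $(x,y)$ adjacent to $(z,t)$ iff $xz\in E(G)$, or $x=z$ and $yt\in E(H)$. *)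

theory Defs
  imports Complex_Main
begin

definition graph :: "'a set \<Rightarrow> 'a set set \<Rightarrow> bool" where
  "graph V E \<longleftrightarrow> finite V \<and> (\<forall>e\<in>E. \<exists>u v. u \<noteq> v \<and> u \<in> V \<and> v \<in> V \<and> e = {u, v})"

definition degree :: "'a set set \<Rightarrow> 'a \<Rightarrow> nat" where
  "degree E v = card {u. {u, v} \<in> E}"

definition maxdeg :: "'a set \<Rightarrow> 'a set set \<Rightarrow> nat" where
  "maxdeg V E = Max (degree E ` V)"

definition bipartite :: "'a set \<Rightarrow> 'a set set \<Rightarrow> bool" where
  "bipartite V E \<longleftrightarrow> (\<exists>A. A \<subseteq> V \<and> (\<forall>e\<in>E. card (e \<inter> A) = 1))"

definition signing :: "'a set set \<Rightarrow> ('a set \<Rightarrow> real) \<Rightarrow> bool" where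
  "signing E \<sigma> \<longleftrightarrow> (\<forall>e\<in>E. \<sigma> e = -1 \<or> \<sigma> e = 1)"

definition signed_adj :: "'a set set \<Rightarrow> ('a set \<Rightarrow> real) \<Rightarrow> 'a \<Rightarrow> 'a \<Rightarrow> real" where
  "signed_adj E \<sigma> u v = (if {u, v} \<in> E then \<sigma> {u, v} else 0)"

definition eigenvalue :: "'a set \<Rightarrow> ('a \<Rightarrow> 'a \<Rightarrow> real) \<Rightarrow> complex \<Rightarrow> bool" where
  "eigenvalue V M mu \<longleftrightarrow> (\<exists>x :: 'a \<Rightarrow> complex. (\<exists>v\<in>V. x v \<noteq> 0) \<and>
      (\<forall>u\<in>V. (\<Sum>w\<in>V. complex_of_real (M u w) * x w) = mu * x u))"

definition spec_radius :: "'a set \<Rightarrow> ('a \<Rightarrow> 'a \<Rightarrow> real) \<Rightarrow> real" where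
  "spec_radius V M = Max {cmod mu | mu. eigenvalue V M mu}"

definition good_signing :: "'a set \<Rightarrow> 'a set set \<Rightarrow> ('a set \<Rightarrow> real) \<Rightarrow> bool" where
  "good_signing V E \<sigma> \<longleftrightarrow> signing E \<sigma> \<and> maxdeg V E > 1 \<and>
     spec_radius V (signed_adj E \<sigma>) \<le> 2 * sqrt (real (maxdeg V E) - 1)"

definition lex_vertices :: "'a set \<Rightarrow> 'b set \<Rightarrow> ('a \<times> 'b) set" where
  "lex_vertices VG VH = VG \<times> VH"

definition lex_edges :: "'a set \<Rightarrow> 'a set set \<Rightarrow> 'b set \<Rightarrow> 'b set set \<Rightarrow> ('a \<times> 'b) set set" where
  "lex_edges VG EG VH EH = {{(x, y), (z, t)} | x y z t.
      x \<in> VG \<and> z \<in> VG \<and> y \<in> VH \<and> t \<in> VH \<and> ({x, z} \<in> EG \<or> (x = z \<and> {y, t} \<in> EH))}"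

definition K2bar_V :: "nat set" where "K2bar_V = {0, 1}"
definition K2bar_E :: "nat set set" where "K2bar_E = {}"

end

theory Submission
  imports Defs
begin

text \<open>
  Sign an edge of the lexicographic product with the edgeless graph on \<open>{0,1}\<close> like the edge
  of \<open>H\<^sub>1\<close> it lies over, and an edge lying over an edge of \<open>H\<^sub>2\<close> like that edge if it joins
  equal copies and oppositely otherwise. The signed adjacency matrix then acts on \<open>(x\<^sub>0, x\<^sub>1)\<close>
  through \<open>A\<^sub>1\<close> on \<open>x\<^sub>0 + x\<^sub>1\<close> and through \<open>A\<^sub>2\<close> on \<open>x\<^sub>0 - x\<^sub>1\<close>, so its eigenvalues are exactly
  twice those of \<open>A\<^sub>1\<close> and \<open>A\<^sub>2\<close>. Its spectral radius is therefore at most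
  \<open>2 \<cdot> 2\<surd>(\<Delta>(H\<^sub>1) - 1) = 2\<surd>(4\<Delta>(H\<^sub>1) - 4)\<close>, while the maximum degree of the product is at
  least \<open>2\<Delta>(G) = 4\<Delta>(H\<^sub>1)\<close>.
\<close>

lemma Max_scaled_Un_le:
  fixes S T :: "real set"
  assumes "Max S \<le> b" and "Max T \<le> b" and "0 \<le> b" and "1 \<le> c"
  shows "Max ((\<lambda>r. c * r) ` (S \<union> T)) \<le> c * b"
proof -
  have "b \<le> c * b" using assms(3,4) by (simp add: mult_le_cancel_right1)
  have inj: "inj_on (\<lambda>r. c * r) A" for A using assms(4) by (auto intro: inj_onI)
  show ?thesis
  proof (cases "finite S \<and> finite T")
    case True
    show ?thesis
    proof (cases "S \<union> T = {}")
      case True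
      then show ?thesis using assms(1) \<open>b \<le> c * b\<close> by simp
    next
      case False
      have "s \<le> Max S \<or> s \<le> Max T" if "s \<in> S \<union> T" for s
        using that \<open>finite S \<and> finite T\<close> Max_ge by blast
      then have "c * s \<le> c * b" if "s \<in> S \<union> T" for s
        using that assms(1,2,4) by (intro mult_left_mono) fastforce+
      then show ?thesis
        using True False by (intro Max.boundedI) auto
    qed
  next
    case False
    then have "infinite ((\<lambda>r. c * r) ` (S \<union> T))"
      using finite_imageD[OF _ inj] by blast
    then have "Max ((\<lambda>r. c * r) ` (S \<union> T)) = Max S \<or> Max ((\<lambda>r. c * r) ` (S \<union> T)) = Max T"
      using False by (auto simp: Max.infinite)
    then show ?thesis using assms(1,2) \<open>b \<le> c * b\<close> by auto
  qed
qed

context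
  fixes V :: "'a set" and A B :: "'a \<Rightarrow> 'a \<Rightarrow> real" and M :: "'a \<times> nat \<Rightarrow> 'a \<times> nat \<Rightarrow> real"
  assumes twofold: "\<And>x y z t. x \<in> V \<Longrightarrow> z \<in> V \<Longrightarrow> y \<in> {0,1} \<Longrightarrow> t \<in> {0,1} \<Longrightarrow>
      M (x,y) (z,t) = A x z + (if y = t then B x z else - B x z)"
begin

lemma twofold_row_sum:
  assumes x: "x \<in> V" and y: "y \<in> {0,1}"
  shows "(\<Sum>q\<in>V \<times> {0,1}. complex_of_real (M (x,y) q) * w q)
     = (\<Sum>z\<in>V. complex_of_real (A x z) * (w (z,0) + w (z,1)))
       + (if y = 0 then 1 else -1) * (\<Sum>z\<in>V. complex_of_real (B x z) * (w (z,0) - w (z,1)))"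
proof -
  have "(\<Sum>q\<in>V \<times> {0,1}. complex_of_real (M (x,y) q) * w q)
      = (\<Sum>z\<in>V. \<Sum>t\<in>{0::nat,1}. complex_of_real (M (x,y) (z,t)) * w (z,t))"
    by (subst sum.cartesian_product) (simp add: split_def)
  also have "\<dots> = (\<Sum>z\<in>V. complex_of_real (A x z) * (w (z,0) + w (z,1))
       + (if y = 0 then 1 else -1) * (complex_of_real (B x z) * (w (z,0) - w (z,1))))"
    using twofold[OF x _ y] y by (intro sum.cong) (auto simp: algebra_simps)
  finally show ?thesis by (simp add: sum.distrib sum_distrib_left)
qed

lemma eigenvalue_twofold_cases:
  assumes "eigenvalue (V \<times> {0,1}) M \<mu>"
  shows "eigenvalue V A (\<mu>/2) \<or> eigenvalue V B (\<mu>/2)"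
proof -
  obtain w where nz: "\<exists>p\<in>V \<times> {0,1}. w p \<noteq> 0"
    and eq: "\<forall>p\<in>V \<times> {0,1}. (\<Sum>q\<in>V \<times> {0,1}. complex_of_real (M p q) * w q) = \<mu> * w p"
    using assms unfolding eigenvalue_def by blast
  define a where "a z = w (z,0) + w (z,1)" for z
  define b where "b z = w (z,0) - w (z,1)" for z
  define SA where "SA x = (\<Sum>z\<in>V. complex_of_real (A x z) * a z)" for x
  define SB where "SB x = (\<Sum>z\<in>V. complex_of_real (B x z) * b z)" for x
  have "SA x + SB x = \<mu> * w (x,0)" "SA x - SB x = \<mu> * w (x,1)" if "x \<in> V" for x
    using eq twofold_row_sum[OF that, of 0 w] twofold_row_sum[OF that, of 1 w] that
    by (simp_all add: SA_def SB_def a_def b_def)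
  then have eigA: "SA x = \<mu>/2 * a x" and eigB: "SB x = \<mu>/2 * b x" if "x \<in> V" for x
    using that unfolding a_def b_def by (auto simp: field_simps dest!: sym[of "SA x + SB x"])
  from nz obtain x y where "x \<in> V" "y \<in> {0::nat,1}" "w (x,y) \<noteq> 0" by auto
  then have "a x \<noteq> 0 \<or> b x \<noteq> 0" unfolding a_def b_def by (auto simp: algebra_simps)
  then show ?thesis
    using \<open>x \<in> V\<close> eigA eigB unfolding eigenvalue_def SA_def SB_def by blast
qed

lemma eigenvalue_twofold_lift_fst:
  assumes "eigenvalue V A \<nu>"
  shows "eigenvalue (V \<times> {0,1}) M (2 * \<nu>)"
proof -
  obtain v where nz: "\<exists>x\<in>V. v x \<noteq> 0"
    and eq: "\<forall>x\<in>V. (\<Sum>z\<in>V. complex_of_real (A x z) * v z) = \<nu> * v x"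
    using assms unfolding eigenvalue_def by blast
  show ?thesis
    unfolding eigenvalue_def
  proof (intro exI[of _ "\<lambda>(z,t). v z"] conjI ballI)
    show "\<exists>p\<in>V \<times> {0,1}. (case p of (z,t) \<Rightarrow> v z) \<noteq> 0"
      using nz by auto
  next
    fix p assume "p \<in> V \<times> {0::nat,1}"
    then obtain x y where p: "p = (x,y)" and x: "x \<in> V" and y: "y \<in> {0::nat,1}" by auto
    show "(\<Sum>q\<in>V \<times> {0,1}. complex_of_real (M p q) * (case q of (z,t) \<Rightarrow> v z))
        = 2 * \<nu> * (case p of (z,t) \<Rightarrow> v z)"
      using twofold_row_sum[OF x y, of "\<lambda>(z,t). v z"] eq x
      by (simp add: p mult.left_commute[of _ 2] flip: sum_distrib_left)
  qed
qed

lemma eigenvalue_twofold_lift_snd: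
  assumes "eigenvalue V B \<nu>"
  shows "eigenvalue (V \<times> {0,1}) M (2 * \<nu>)"
proof -
  obtain v where nz: "\<exists>x\<in>V. v x \<noteq> 0"
    and eq: "\<forall>x\<in>V. (\<Sum>z\<in>V. complex_of_real (B x z) * v z) = \<nu> * v x"
    using assms unfolding eigenvalue_def by blast
  define w where "w = (\<lambda>(z, t::nat). if t = 0 then v z else - v z)"
  show ?thesis
    unfolding eigenvalue_def
  proof (intro exI[of _ w] conjI ballI)
    show "\<exists>p\<in>V \<times> {0,1}. w p \<noteq> 0"
      using nz by (auto simp: w_def)
  next
    fix p assume "p \<in> V \<times> {0::nat,1}"
    then obtain x y where p: "p = (x,y)" and x: "x \<in> V" and y: "y \<in> {0::nat,1}" by auto
    show "(\<Sum>q\<in>V \<times> {0,1}. complex_of_real (M p q) * w q) = 2 * \<nu> * w p"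
      using twofold_row_sum[OF x y, of w] eq x y
      by (auto simp: p w_def mult.left_commute[of _ 2] simp flip: sum_distrib_left)
  qed
qed

lemma eigenvalue_twofold_iff:
  "eigenvalue (V \<times> {0,1}) M \<mu> \<longleftrightarrow> eigenvalue V A (\<mu>/2) \<or> eigenvalue V B (\<mu>/2)"
proof
  show "eigenvalue V A (\<mu>/2) \<or> eigenvalue V B (\<mu>/2)" if "eigenvalue (V \<times> {0,1}) M \<mu>"
    using eigenvalue_twofold_cases[OF that] .
  show "eigenvalue (V \<times> {0,1}) M \<mu>" if "eigenvalue V A (\<mu>/2) \<or> eigenvalue V B (\<mu>/2)"
    using that eigenvalue_twofold_lift_fst eigenvalue_twofold_lift_snd by fastforce
qed

lemma spec_radius_twofold_le:
  assumes "spec_radius V A \<le> b" and "spec_radius V B \<le> b" and "0 \<le> b"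
  shows "spec_radius (V \<times> {0,1}) M \<le> 2 * b"
proof -
  have "{cmod \<mu> | \<mu>. eigenvalue (V \<times> {0,1}) M \<mu>}
      = (\<lambda>r. 2 * r) ` ({cmod \<mu> | \<mu>. eigenvalue V A \<mu>} \<union> {cmod \<mu> | \<mu>. eigenvalue V B \<mu>})"
  proof (intro equalityI subsetI)
    fix r assume "r \<in> {cmod \<mu> | \<mu>. eigenvalue (V \<times> {0,1}) M \<mu>}"
    then obtain \<mu> where "r = 2 * cmod (\<mu>/2)" and "eigenvalue V A (\<mu>/2) \<or> eigenvalue V B (\<mu>/2)"
      using eigenvalue_twofold_iff by (auto simp: norm_divide)
    then show "r \<in> (\<lambda>r. 2 * r) ` ({cmod \<mu> | \<mu>. eigenvalue V A \<mu>} \<union> {cmod \<mu> | \<mu>. eigenvalue V B \<mu>})"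
      by blast
  next
    fix r assume "r \<in> (\<lambda>r. 2 * r) ` ({cmod \<mu> | \<mu>. eigenvalue V A \<mu>} \<union> {cmod \<mu> | \<mu>. eigenvalue V B \<mu>})"
    then obtain \<nu> where r: "r = cmod (2 * \<nu>)" and "eigenvalue V A \<nu> \<or> eigenvalue V B \<nu>"
      by (auto simp: norm_mult)
    then have "eigenvalue (V \<times> {0,1}) M (2 * \<nu>)" using eigenvalue_twofold_iff by simp
    then show "r \<in> {cmod \<mu> | \<mu>. eigenvalue (V \<times> {0,1}) M \<mu>}" using r by blast
  qed
  then show ?thesis
    using Max_scaled_Un_le[of _ b _ 2] assms unfolding spec_radius_def by simp
qed

end

definition lex_sign :: "'a set set \<Rightarrow> ('a set \<Rightarrow> real) \<Rightarrow> ('a set \<Rightarrow> real) \<Rightarrow> ('a \<times> nat) set \<Rightarrow> real"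
  where "lex_sign E1 \<sigma>1 \<sigma>2 e =
    (if fst ` e \<in> E1 then \<sigma>1 (fst ` e)
     else if card (snd ` e) = 2 then - \<sigma>2 (fst ` e) else \<sigma>2 (fst ` e))"

lemma lex_edges_K2bar_iff:
  assumes "x \<in> V" "z \<in> V" "y \<in> K2bar_V" "t \<in> K2bar_V"
  shows "{(x,y),(z,t)} \<in> lex_edges V E K2bar_V K2bar_E \<longleftrightarrow> {x,z} \<in> E"
proof
  assume "{(x,y),(z,t)} \<in> lex_edges V E K2bar_V K2bar_E"
  then obtain x' y' z' t' where e: "{(x,y),(z,t)} = {(x',y'),(z',t')}" and "{x',z'} \<in> E"
    unfolding lex_edges_def K2bar_E_def by auto
  moreover have "{x,z} = {x',z'}" using e by (auto simp: doubleton_eq_iff)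
  ultimately show "{x,z} \<in> E" by simp
next
  assume "{x,z} \<in> E"
  then show "{(x,y),(z,t)} \<in> lex_edges V E K2bar_V K2bar_E"
    using assms unfolding lex_edges_def by blast
qed

lemma signed_adj_lex_sign:
  assumes "E1 \<inter> E2 = {}" "E1 \<union> E2 = E"
    and "x \<in> V" "z \<in> V" "y \<in> K2bar_V" "t \<in> K2bar_V"
  shows "signed_adj (lex_edges V E K2bar_V K2bar_E) (lex_sign E1 \<sigma>1 \<sigma>2) (x,y) (z,t)
     = signed_adj E1 \<sigma>1 x z + (if y = t then signed_adj E2 \<sigma>2 x z else - signed_adj E2 \<sigma>2 x z)"
proof -
  have "fst ` {(x,y),(z,t)} = {x,z}" "snd ` {(x,y),(z,t)} = {y,t}" by auto
  moreover have "card {y,t} = 2 \<longleftrightarrow> y \<noteq> t" by (cases "y = t") auto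
  ultimately show ?thesis
    using assms unfolding signed_adj_def lex_edges_K2bar_iff[OF assms(3-6)] lex_sign_def by auto
qed

lemma spec_radius_lex_sign_le:
  assumes "E1 \<inter> E2 = {}" "E1 \<union> E2 = E"
    and "spec_radius V (signed_adj E1 \<sigma>1) \<le> b" and "spec_radius V (signed_adj E2 \<sigma>2) \<le> b"
    and "0 \<le> b"
  shows "spec_radius (lex_vertices V K2bar_V)
      (signed_adj (lex_edges V E K2bar_V K2bar_E) (lex_sign E1 \<sigma>1 \<sigma>2)) \<le> 2 * b"
  unfolding lex_vertices_def K2bar_V_def
proof (rule spec_radius_twofold_le)
  show "signed_adj (lex_edges V E {0,1} K2bar_E) (lex_sign E1 \<sigma>1 \<sigma>2) (x,y) (z,t)
      = signed_adj E1 \<sigma>1 x z + (if y = t then signed_adj E2 \<sigma>2 x z else - signed_adj E2 \<sigma>2 x z)"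
    if "x \<in> V" "z \<in> V" "y \<in> {0,1}" "t \<in> {0,1}" for x y z t
    using signed_adj_lex_sign[OF assms(1,2)] that unfolding K2bar_V_def by blast
qed (use assms(3-5) in auto)

lemma signing_lex_sign:
  assumes "E1 \<union> E2 = E" "signing E1 \<sigma>1" "signing E2 \<sigma>2"
  shows "signing (lex_edges V E K2bar_V K2bar_E) (lex_sign E1 \<sigma>1 \<sigma>2)"
  unfolding signing_def
proof
  fix e assume "e \<in> lex_edges V E K2bar_V K2bar_E"
  then obtain x y z t where "e = {(x,y),(z,t)}" and "{x,z} \<in> E"
    unfolding lex_edges_def K2bar_E_def by auto
  moreover have "fst ` {(x,y),(z,t)} = {x,z}" by auto
  ultimately show "lex_sign E1 \<sigma>1 \<sigma>2 e = -1 \<or> lex_sign E1 \<sigma>1 \<sigma>2 e = 1"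
    using assms unfolding lex_sign_def signing_def by auto
qed

lemma degree_lex_K2bar_ge:
  assumes "graph V E" and "v \<in> V" and "i \<in> K2bar_V"
  shows "2 * degree E v \<le> degree (lex_edges V E K2bar_V K2bar_E) (v,i)"
proof -
  let ?N = "{u. {u,v} \<in> E}"
  let ?R = "{q. {q,(v,i)} \<in> lex_edges V E K2bar_V K2bar_E}"
  have "finite V" using assms(1) unfolding graph_def by auto
  have NV: "?N \<subseteq> V"
    using assms(1) unfolding graph_def by (fastforce simp: doubleton_eq_iff)
  have "{(u,j),(v,i)} \<in> lex_edges V E K2bar_V K2bar_E" if "u \<in> ?N" and "j \<in> K2bar_V" for u j
    using lex_edges_K2bar_iff[of u V v j i E] that NV assms(2,3) by auto
  then have sub: "?N \<times> K2bar_V \<subseteq> ?R" by (auto simp: insert_commute)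
  have "?R \<subseteq> V \<times> K2bar_V"
    unfolding lex_edges_def by (fastforce simp: doubleton_eq_iff)
  then have "finite ?R" using \<open>finite V\<close> finite_subset unfolding K2bar_V_def by blast
  then have "card (?N \<times> K2bar_V) \<le> card ?R" using sub by (rule card_mono)
  then show ?thesis unfolding degree_def K2bar_V_def by (simp add: card_cartesian_product)
qed

lemma maxdeg_lex_K2bar_ge:
  assumes "graph V E" and "V \<noteq> {}"
  shows "2 * maxdeg V E \<le> maxdeg (lex_vertices V K2bar_V) (lex_edges V E K2bar_V K2bar_E)"
proof -
  have "finite V" using assms(1) unfolding graph_def by auto
  then have "maxdeg V E \<in> degree E ` V"
    unfolding maxdeg_def using assms(2) by (intro Max_in) auto
  then obtain v where "v \<in> V" and "maxdeg V E = degree E v" by auto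
  moreover have "degree (lex_edges V E K2bar_V K2bar_E) (v,0)
      \<le> maxdeg (lex_vertices V K2bar_V) (lex_edges V E K2bar_V K2bar_E)"
    unfolding maxdeg_def lex_vertices_def using \<open>finite V\<close> \<open>v \<in> V\<close>
    by (intro Max_ge) (auto simp: K2bar_V_def)
  ultimately show ?thesis
    using degree_lex_K2bar_ge[OF assms(1) \<open>v \<in> V\<close>, of 0] by (simp add: K2bar_V_def)
qed

theorem mainTheorem2:
  fixes V :: "'a set" and E E1 E2 :: "'a set set"
  assumes "graph V E" and "\<not> bipartite V E"
    and "graph V E1" and "graph V E2"
    and "bipartite V E1" and "bipartite V E2"
    and "E1 \<inter> E2 = {}" and "E1 \<union> E2 = E"
    and "maxdeg V E = 2 * maxdeg V E1" and "maxdeg V E = 2 * maxdeg V E2"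
    and "\<exists>\<sigma>1. good_signing V E1 \<sigma>1" and "\<exists>\<sigma>2. good_signing V E2 \<sigma>2"
  shows "\<exists>\<sigma>. good_signing (lex_vertices V K2bar_V) (lex_edges V E K2bar_V K2bar_E) \<sigma>"
proof -
  obtain \<sigma>1 \<sigma>2 where g1: "good_signing V E1 \<sigma>1" and g2: "good_signing V E2 \<sigma>2"
    using assms(11,12) by blast
  define d where "d = maxdeg V E1"
  define D where "D = maxdeg (lex_vertices V K2bar_V) (lex_edges V E K2bar_V K2bar_E)"
  define \<sigma> where "\<sigma> = lex_sign E1 \<sigma>1 \<sigma>2"
  have "1 < d" and "maxdeg V E2 = d"
    using g1 assms(9,10) unfolding good_signing_def d_def by auto
  have "V \<noteq> {}" \<comment> \<open>otherwise \<open>maxdeg V E\<close> and \<open>maxdeg V E1\<close> are the same junk value \<open>Max {}\<close>\<close>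
    using assms(9) \<open>1 < d\<close> unfolding d_def maxdeg_def by auto
  then have "4 * d \<le> D"
    using maxdeg_lex_K2bar_ge[OF assms(1)] assms(9) unfolding D_def d_def by simp
  have "spec_radius V (signed_adj E1 \<sigma>1) \<le> 2 * sqrt (real d - 1)"
    and "spec_radius V (signed_adj E2 \<sigma>2) \<le> 2 * sqrt (real d - 1)"
    using g1 g2 \<open>maxdeg V E2 = d\<close> unfolding good_signing_def d_def by auto
  then have "spec_radius (lex_vertices V K2bar_V) (signed_adj (lex_edges V E K2bar_V K2bar_E) \<sigma>)
      \<le> 2 * (2 * sqrt (real d - 1))"
    unfolding \<sigma>_def using \<open>1 < d\<close> by (intro spec_radius_lex_sign_le[OF assms(7,8)]) auto
  also have "\<dots> = 2 * sqrt (4 * (real d - 1))"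
    by (simp only: real_sqrt_mult real_sqrt_four)
  also have "\<dots> \<le> 2 * sqrt (real D - 1)"
    using \<open>4 * d \<le> D\<close> by (intro mult_left_mono real_sqrt_le_mono) auto
  finally show ?thesis
    using signing_lex_sign[OF assms(8)] g1 g2 \<open>1 < d\<close> \<open>4 * d \<le> D\<close>
    unfolding good_signing_def D_def \<sigma>_def by auto
qed

end
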